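(* Let $1\le p\le q$ be integers and $n=p+q$ (the case $G=Sp(p,q)$). Let $\mu=(a_1,\dots,a_p\mid b_1,\dots,b_q)\in\mathbb{Z}^n$ be $\Delta^+(\mathfrak{k},\mathfrak{t})$-dominant and u-large, and assume that $\mu-\beta$ is also $\Delta^+(\mathfrak{k},\mathfrak{t})$-dominant. Then $$\|\mu\|_{\mathrm{spin}}>\|\mu-\beta\|_{\mathrm{spin}}.$$ Equivalently: along any pencil $\{\mu_0+m\beta\mid m\in\mathbb{Z}_{\ge0}\}$ of $\Delta^+(\mathfrak{k},\mathfrak{t})$-dominant weights, the spin norm strictly increases at each step from $\mu-\beta$ to $\mu$ once $\mu$ is u-large.
   Context: Weights are vectors in $\mathbb{R}^n$ written $(x_1,\dots,x_p\mid y_1,\dots,y_q)$, with the standard inner product $\langle\cdot,\cdot\rangle$ and Euclidean norm $\|\cdot\|$. Put $\rho_c=(p,p-1,\dots,1\mid q,q-1,\dots,1)$ and $\beta=(1,0,\dots,0\mid 1,0,\dots,0)$. A weight is $\Delta^+(\mathfrak{k},\mathfrak{t})$-dominant if $x_1\ge\cdots\ge x_p\ge0$ and $y_1\ge\cdots\ge y_q\ge 0$. For $\nu\in\mathbb{Z}^n$, $\{\nu\}$ denotes the vector obtained by replacing every coordinate by its absolute value and then rearranging the first $p$ coordinates in decreasing order and the last $q$ coordinates in decreasing order; the $\mathfrak{k}$-value is $\|\nu\|_{\mathfrak{k}}:=\|\{\nu\}+\rho_c\|$. Let $\Omega_{p,q}$ be the set of $(x_1,\dots,x_p\mid y_1,\dots,y_q)\in\mathbb{Z}^n$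 with $q\ge x_1\ge\cdots\ge x_p\ge0$ and $y_j=\#\{i\mid q-x_i\ge j\}$ for $1\le j\le q$ (these are exactly the vectors $\rho_n^{(\ell)}=w\rho-\rho_c$, $\rho=(n,n-1,\dots,1)$, as $w$ runs over the Weyl group elements making $\Delta^+(\mathfrak{k},\mathfrak{t})\cup w\Delta^+(\mathfrak{p},\mathfrak{t})$ a positive system). The spin norm of a $\Delta^+(\mathfrak{k},\mathfrak{t})$-dominant $\nu\in\mathbb{Z}^n$ is $\|\nu\|_{\mathrm{spin}}:=\min_{\tau\in\Omega_{p,q}}\|\nu-\tau\|_{\mathfrak{k}}$. A dominant integral weight $\mu=(a_1,\dots,a_p\mid b_1,\dots,b_q)$ is called u-large (i.e. not in the unitarily small convex hull of Salamanca-Riba–Vogan) if there exist $0\le f\le p$ and $0\le g\le q$ with $\sum_{i=1}^f a_i+\sum_{j=1}^g b_j>2pq-2(p-f)(q-g)$; otherwise it is u-small. *)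

theory Defs
  imports "HOL-Analysis.Analysis"
begin

text \<open>A weight (x_1..x_p | y_1..y_q) in Z^n is represented as a pair of integer lists
  (x, y) with length x = p and length y = q.\<close>

type_synonym weight = "int list \<times> int list"

definition wminus :: "weight \<Rightarrow> weight \<Rightarrow> weight" where
  "wminus \<nu> \<tau> = (map2 (-) (fst \<nu>) (fst \<tau>), map2 (-) (snd \<nu>) (snd \<tau>))"

definition wplus :: "weight \<Rightarrow> weight \<Rightarrow> weight" where
  "wplus \<nu> \<tau> = (map2 (+) (fst \<nu>) (fst \<tau>), map2 (+) (snd \<nu>) (snd \<tau>))"

definition wnorm :: "weight \<Rightarrow> real" where
  "wnorm \<nu> = sqrt (real_of_int ((\<Sum>v\<leftarrow>fst \<nu>. v^2) + (\<Sum>v\<leftarrow>snd \<nu>. v^2)))"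

definition rho_c :: "nat \<Rightarrow> nat \<Rightarrow> weight" where
  "rho_c p q = (map int (rev [1..<p+1]), map int (rev [1..<q+1]))"

definition beta :: "nat \<Rightarrow> nat \<Rightarrow> weight" where
  "beta p q = (1 # replicate (p - 1) 0, 1 # replicate (q - 1) 0)"

definition kdominant :: "weight \<Rightarrow> bool" where
  "kdominant \<nu> \<longleftrightarrow> sorted_wrt (\<ge>) (fst \<nu>) \<and> (\<forall>v\<in>set (fst \<nu>). 0 \<le> v)
                    \<and> sorted_wrt (\<ge>) (snd \<nu>) \<and> (\<forall>v\<in>set (snd \<nu>). 0 \<le> v)"

definition brace :: "weight \<Rightarrow> weight" where
  "brace \<nu> = (rev (sort (map abs (fst \<nu>))), rev (sort (map abs (snd \<nu>))))"

definition knorm :: "nat \<Rightarrow> nat \<Rightarrow> weight \<Rightarrow> real" where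
  "knorm p q \<nu> = wnorm (wplus (brace \<nu>) (rho_c p q))"

definition Omega :: "nat \<Rightarrow> nat \<Rightarrow> weight set" where
  "Omega p q = {(x, y). length x = p \<and> sorted_wrt (\<ge>) x \<and> (\<forall>v\<in>set x. 0 \<le> v \<and> v \<le> int q)
      \<and> y = map (\<lambda>j. int (card {i. i < p \<and> int q - x ! i \<ge> int j})) [1..<q+1]}"

definition spin_norm :: "nat \<Rightarrow> nat \<Rightarrow> weight \<Rightarrow> real" where
  "spin_norm p q \<nu> = Min ((\<lambda>\<tau>. knorm p q (wminus \<nu> \<tau>)) ` Omega p q)"

definition u_large :: "nat \<Rightarrow> nat \<Rightarrow> weight \<Rightarrow> bool" where
  "u_large p q \<mu> \<longleftrightarrow> (\<exists>f\<le>p. \<exists>g\<le>q.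
      sum_list (take f (fst \<mu>)) + sum_list (take g (snd \<mu>))
        > 2 * int p * int q - 2 * (int p - int f) * (int q - int g))"

end

theory Submission
  imports Defs "HOL-Combinatorics.Permutations"
begin

(*
  Write the elements of Omega as (x, x'), where x is a partition in the p x q box and x' is the
  conjugate of its complement; since (x')' = x, the two blocks play symmetric roles. On a block u
  of length n, the square of the k-value is sum_i u_i^2 + 2 sum_k T_k(u) + const, where T_k(u) is
  the sum of the k largest |u_i|. So it does not increase when the absolute values are replaced
  by weakly submajorized ones, which makes the effect of changing one or two entries easy to
  control.

  Let tau = (x, x') realize the spin norm of mu. We find tau'' in Omega with
  |mu - beta - tau''|_k < |mu - tau|_k. If both first entries of mu - tau are positive, take
  tau'' = tau. If a_1 <= x_1, lower the last entry of x equal to x_1: the first block does not get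
  worse, one entry of x' goes up by one, and u-largeness forces b_1 to be so large that the second
  block still strictly decreases. The case b_1 <= x'_1 is the same with the blocks exchanged.
*)

section \<open>Sums of the largest absolute values\<close>

definition abs_desc :: "int list \<Rightarrow> int list" where
  "abs_desc u = rev (sort (map abs u))"

definition top_sum :: "int list \<Rightarrow> nat \<Rightarrow> int" where
  "top_sum u k = (\<Sum>i<k. abs_desc u ! i)"

lemma length_abs_desc [simp]: "length (abs_desc u) = length u"
  by (simp add: abs_desc_def)

lemma sorted_abs_desc: "sorted_wrt (\<ge>) (abs_desc u)"
  by (simp add: abs_desc_def sorted_wrt_rev)

lemma sorted_wrt_ge_nth:
  assumes "sorted_wrt (\<ge>) (xs :: 'a::linorder list)" "i \<le> j" "j < length xs"
  shows "xs ! j \<le> xs ! i"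
  using assms unfolding sorted_wrt_iff_nth_less by (cases "i = j") auto

lemma sum_subset_le_sum_prefix:
  fixes w :: "'a::{linorder, ordered_comm_monoid_add} list"
  assumes "sorted_wrt (\<ge>) w" "J \<subseteq> {..<length w}" "card J = k"
  shows "(\<Sum>j\<in>J. w ! j) \<le> (\<Sum>i<k. w ! i)"
  using assms(2,3)
proof (induction k arbitrary: J)
  case 0
  then show ?case using finite_subset[OF 0(1)] by simp
next
  case (Suc k)
  have fin: "finite J" using finite_subset[OF Suc.prems(1)] by simp
  define m where "m = Max J"
  have "J \<noteq> {}" using Suc.prems(2) by auto
  then have m: "m \<in> J" using Max_in[OF fin] m_def by simp
  have "J \<subseteq> {..m}" using Max_ge[OF fin] m_def by auto
  then have "Suc k \<le> Suc m" using card_mono[of "{..m}" J] Suc.prems(2) by simp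
  moreover have "m < length w" using m Suc.prems(1) by auto
  ultimately have "w ! m \<le> w ! k" using sorted_wrt_ge_nth[OF assms(1), of k m] by simp
  moreover have "(\<Sum>j\<in>J - {m}. w ! j) \<le> (\<Sum>i<k. w ! i)"
    using Suc.IH[of "J - {m}"] Suc.prems m fin by auto
  ultimately have "w ! m + (\<Sum>j\<in>J - {m}. w ! j) \<le> w ! k + (\<Sum>i<k. w ! i)"
    by (rule add_mono)
  then show ?case using sum.remove[OF fin m, of "\<lambda>j. w ! j"] by (simp add: add.commute)
qed

lemma abs_desc_permutes:
  obtains \<pi> where "\<pi> permutes {..<length u}" "\<And>i. i < length u \<Longrightarrow> abs_desc u ! i = \<bar>u ! \<pi> i\<bar>"
proof -
  have "mset (abs_desc u) = mset (map abs u)" by (simp add: abs_desc_def)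
  then obtain \<pi> where \<pi>: "\<pi> permutes {..<length (map abs u)}" "permute_list \<pi> (map abs u) = abs_desc u"
    by (rule mset_eq_permutation)
  then have "abs_desc u ! i = \<bar>u ! \<pi> i\<bar>" if "i < length u" for i
    using that permutes_in_image[OF \<pi>(1)] permute_list_nth[of \<pi> "map abs u" i] by auto
  with \<pi>(1) show thesis by (intro that) simp_all
qed

lemma sum_abs_le_top_sum:
  assumes "J \<subseteq> {..<length u}" "card J = k"
  shows "(\<Sum>j\<in>J. \<bar>u ! j\<bar>) \<le> top_sum u k"
proof -
  obtain \<pi> where \<pi>: "\<pi> permutes {..<length u}" "\<And>i. i < length u \<Longrightarrow> abs_desc u ! i = \<bar>u ! \<pi> i\<bar>"
    using abs_desc_permutes[of u] by blast
  define I where "I = inv \<pi> ` J"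
  have inj: "inj_on \<pi> I" using \<pi>(1) permutes_inj_on by blast
  have J: "J = \<pi> ` I"
    unfolding I_def using permutes_inverses(1)[OF \<pi>(1)] by (simp add: image_comp)
  have I: "I \<subseteq> {..<length u}"
    unfolding I_def using assms(1) permutes_in_image[OF permutes_inv[OF \<pi>(1)]] by blast
  have "(\<Sum>j\<in>J. \<bar>u ! j\<bar>) = (\<Sum>i\<in>I. \<bar>u ! \<pi> i\<bar>)"
    unfolding J by (simp add: sum.reindex[OF inj])
  also have "\<dots> = (\<Sum>i\<in>I. abs_desc u ! i)"
    using \<pi>(2) I by (intro sum.cong) auto
  also have "\<dots> \<le> top_sum u k"
    unfolding top_sum_def
    using sum_subset_le_sum_prefix[OF sorted_abs_desc, where J=I and k=k] I assms(2) card_image[OF inj] J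
    by simp
  finally show ?thesis .
qed

lemma top_sum_attained:
  assumes "k \<le> length u"
  obtains J where "J \<subseteq> {..<length u}" "card J = k" "top_sum u k = (\<Sum>j\<in>J. \<bar>u ! j\<bar>)"
proof -
  obtain \<pi> where \<pi>: "\<pi> permutes {..<length u}" "\<And>i. i < length u \<Longrightarrow> abs_desc u ! i = \<bar>u ! \<pi> i\<bar>"
    using abs_desc_permutes[of u] by blast
  have inj: "inj_on \<pi> {..<k}" using \<pi>(1) permutes_inj_on by blast
  have "top_sum u k = (\<Sum>i<k. \<bar>u ! \<pi> i\<bar>)"
    unfolding top_sum_def using \<pi>(2) assms by (intro sum.cong refl) simp
  also have "\<dots> = (\<Sum>j\<in>\<pi> ` {..<k}. \<bar>u ! j\<bar>)"
    by (simp add: sum.reindex[OF inj])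
  finally have "top_sum u k = (\<Sum>j\<in>\<pi> ` {..<k}. \<bar>u ! j\<bar>)" .
  moreover have "\<pi> ` {..<k} \<subseteq> {..<length u}"
    using permutes_in_image[OF \<pi>(1)] assms by fastforce
  moreover have "card (\<pi> ` {..<k}) = k"
    using card_image[OF inj] by simp
  ultimately show thesis using that by blast
qed

text \<open>Weak submajorization of the absolute values, in a subset-sum form that is easy to check
  for changes of one or two entries.\<close>

definition abs_dominated :: "int list \<Rightarrow> int list \<Rightarrow> bool" where
  "abs_dominated u' u \<longleftrightarrow> length u' = length u \<and>
     (\<forall>J \<subseteq> {..<length u}. \<exists>J' \<subseteq> {..<length u}.
        card J' = card J \<and> (\<Sum>j\<in>J. \<bar>u' ! j\<bar>) \<le> (\<Sum>j\<in>J'. \<bar>u ! j\<bar>))"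

lemma top_sum_mono_abs_dominated:
  assumes "abs_dominated u' u" "k \<le> length u"
  shows "top_sum u' k \<le> top_sum u k"
proof -
  have len: "length u' = length u" and
    dom: "\<And>J. J \<subseteq> {..<length u} \<Longrightarrow> \<exists>J' \<subseteq> {..<length u}. card J' = card J \<and>
            (\<Sum>j\<in>J. \<bar>u' ! j\<bar>) \<le> (\<Sum>j\<in>J'. \<bar>u ! j\<bar>)"
    using assms(1) unfolding abs_dominated_def by blast+
  have "k \<le> length u'" using assms(2) len by simp
  then obtain J where J: "J \<subseteq> {..<length u'}" "card J = k" "top_sum u' k = (\<Sum>j\<in>J. \<bar>u' ! j\<bar>)"
    by (rule top_sum_attained)
  have "J \<subseteq> {..<length u}" using J(1) len by simp
  then obtain J' where J': "J' \<subseteq> {..<length u}" "card J' = card J"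
    "(\<Sum>j\<in>J. \<bar>u' ! j\<bar>) \<le> (\<Sum>j\<in>J'. \<bar>u ! j\<bar>)"
    using dom by meson
  have "top_sum u' k \<le> (\<Sum>j\<in>J'. \<bar>u ! j\<bar>)" using J(3) J'(3) by simp
  also have "\<dots> \<le> top_sum u k" using sum_abs_le_top_sum[OF J'(1,2)] J(2) by simp
  finally show ?thesis .
qed

lemma abs_dominatedI_local:
  assumes len: "length u' = length u" and I: "I \<subseteq> {..<length u}"
    and outside: "\<And>l. l < length u \<Longrightarrow> l \<notin> I \<Longrightarrow> \<bar>u' ! l\<bar> = \<bar>u ! l\<bar>"
    and inside: "\<And>L. L \<subseteq> I \<Longrightarrow> \<exists>L' \<subseteq> I. card L' = card L \<and> (\<Sum>l\<in>L. \<bar>u' ! l\<bar>) \<le> (\<Sum>l\<in>L'. \<bar>u ! l\<bar>)"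
  shows "abs_dominated u' u"
  unfolding abs_dominated_def
proof (intro conjI allI impI len)
  fix J assume J: "J \<subseteq> {..<length u}"
  obtain L' where L': "L' \<subseteq> I" "card L' = card (J \<inter> I)"
    "(\<Sum>l\<in>J \<inter> I. \<bar>u' ! l\<bar>) \<le> (\<Sum>l\<in>L'. \<bar>u ! l\<bar>)"
    using inside[of "J \<inter> I"] by blast
  have fin: "finite J" "finite I" "finite L'"
    using finite_subset[OF J] finite_subset[OF I] finite_subset[OF L'(1)] by simp_all
  have JI: "(J - I) \<union> (J \<inter> I) = J" "(J - I) \<inter> (J \<inter> I) = {}" "(J - I) \<inter> L' = {}"
    using L'(1) by blast+
  have "(\<Sum>l\<in>J - I. \<bar>u' ! l\<bar>) = (\<Sum>l\<in>J - I. \<bar>u ! l\<bar>)"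
    using outside J by (intro sum.cong refl) auto
  then have "(\<Sum>l\<in>J. \<bar>u' ! l\<bar>) \<le> (\<Sum>l\<in>(J - I) \<union> L'. \<bar>u ! l\<bar>)"
    using L'(3) fin JI sum.union_disjoint[of "J - I" "J \<inter> I" "\<lambda>l. \<bar>u' ! l\<bar>"]
      sum.union_disjoint[of "J - I" L' "\<lambda>l. \<bar>u ! l\<bar>"] by simp
  moreover have "card ((J - I) \<union> L') = card J"
    using L'(2) fin JI card_Un_disjoint[of "J - I" L'] card_Un_disjoint[of "J - I" "J \<inter> I"] by simp
  moreover have "(J - I) \<union> L' \<subseteq> {..<length u}" using J I L'(1) by blast
  ultimately show "\<exists>J' \<subseteq> {..<length u}. card J' = card J \<and> (\<Sum>j\<in>J. \<bar>u' ! j\<bar>) \<le> (\<Sum>j\<in>J'. \<bar>u ! j\<bar>)"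
    by blast
qed

lemma abs_dominated_pointwise:
  assumes "length u' = length u" "\<And>i. i < length u \<Longrightarrow> \<bar>u' ! i\<bar> \<le> \<bar>u ! i\<bar>"
  shows "abs_dominated u' u"
proof (rule abs_dominatedI_local[OF assms(1) subset_refl])
  fix L assume L: "L \<subseteq> {..<length u}"
  then have "(\<Sum>l\<in>L. \<bar>u' ! l\<bar>) \<le> (\<Sum>l\<in>L. \<bar>u ! l\<bar>)"
    using assms(2) by (intro sum_mono) auto
  with L show "\<exists>L' \<subseteq> {..<length u}. card L' = card L \<and> (\<Sum>l\<in>L. \<bar>u' ! l\<bar>) \<le> (\<Sum>l\<in>L'. \<bar>u ! l\<bar>)"
    by auto
qed simp

lemma abs_dominated_update_two:
  assumes ij: "i < length u" "j < length u" "i \<noteq> j"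
    and sum: "\<bar>v\<bar> + \<bar>w\<bar> \<le> \<bar>u ! i\<bar> + \<bar>u ! j\<bar>"
    and max: "\<bar>v\<bar> \<le> max \<bar>u ! i\<bar> \<bar>u ! j\<bar>" "\<bar>w\<bar> \<le> max \<bar>u ! i\<bar> \<bar>u ! j\<bar>"
  shows "abs_dominated (u[i := v, j := w]) u"
proof (rule abs_dominatedI_local[where I = "{i, j}"])
  let ?u' = "u[i := v, j := w]"
  have vw: "?u' ! i = v" "?u' ! j = w" using ij by simp_all
  have single: "\<exists>l' \<in> {i, j}. \<bar>x\<bar> \<le> \<bar>u ! l'\<bar>" if "\<bar>x\<bar> \<le> max \<bar>u ! i\<bar> \<bar>u ! j\<bar>" for x
    using that by (cases "\<bar>u ! j\<bar> \<le> \<bar>u ! i\<bar>") auto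
  fix L assume "L \<subseteq> {i, j}"
  then consider "L = {}" | l where "l \<in> {i, j}" "L = {l}" | "L = {i, j}" by blast
  then show "\<exists>L' \<subseteq> {i, j}. card L' = card L \<and> (\<Sum>l\<in>L. \<bar>?u' ! l\<bar>) \<le> (\<Sum>l\<in>L'. \<bar>u ! l\<bar>)"
  proof cases
    case 1
    then show ?thesis by (intro exI[of _ "{}"]) simp
  next
    case (2 l)
    then have "\<bar>?u' ! l\<bar> \<le> max \<bar>u ! i\<bar> \<bar>u ! j\<bar>" using vw max by auto
    then obtain l' where "l' \<in> {i, j}" "\<bar>?u' ! l\<bar> \<le> \<bar>u ! l'\<bar>" using single by blast
    then show ?thesis using 2(2) by (intro exI[of _ "{l'}"]) simp
  next
    case 3
    then show ?thesis using vw sum ij(3) by (intro exI[of _ "{i, j}"]) simp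
  qed
qed (use ij in simp_all)

section \<open>The squared k-value of one block\<close>

definition sum_sq :: "int list \<Rightarrow> int" where
  "sum_sq u = (\<Sum>i<length u. (u ! i)\<^sup>2)"

definition block_sq :: "int list \<Rightarrow> int" where
  "block_sq u = (\<Sum>i<length u. (abs_desc u ! i + int (length u - i))\<^sup>2)"

lemma block_sq_eq_sum_list:
  "block_sq u = (\<Sum>v\<leftarrow>map2 (+) (abs_desc u) (map int (rev [1..<length u + 1])). v\<^sup>2)"
proof -
  let ?n = "length u"
  let ?L = "map2 (+) (abs_desc u) (map int (rev [1..<?n + 1]))"
  have "(\<Sum>v\<leftarrow>?L. v\<^sup>2) = (\<Sum>i<?n. (?L ! i)\<^sup>2)"
    by (simp add: sum_list_sum_nth atLeast0LessThan del: upt_Suc)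
  also have "\<dots> = block_sq u"
    unfolding block_sq_def by (intro sum.cong refl) (simp add: rev_nth of_nat_diff del: upt_Suc)
  finally show ?thesis ..
qed

lemma knorm_eq_block_sq:
  assumes "length (fst \<nu>) = p" "length (snd \<nu>) = q"
  shows "knorm p q \<nu> = sqrt (block_sq (fst \<nu>) + block_sq (snd \<nu>))"
  using assms unfolding knorm_def wnorm_def wplus_def brace_def rho_c_def
  by (simp add: block_sq_eq_sum_list abs_desc_def)

lemma sum_sq_abs_desc: "(\<Sum>i<length u. (abs_desc u ! i)\<^sup>2) = sum_sq u"
proof -
  have "(\<Sum>i<length u. (abs_desc u ! i)\<^sup>2) = sum_list (map power2 (abs_desc u))"
    by (simp add: sum_list_sum_nth atLeast0LessThan)
  also have "\<dots> = sum_mset (image_mset power2 (mset (map abs u)))"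
    by (metis abs_desc_def mset_map mset_rev mset_sort sum_mset_sum_list)
  also have "\<dots> = sum_list (map power2 u)"
    by (simp add: sum_mset_sum_list[symmetric] multiset.map_comp comp_def)
  also have "\<dots> = sum_sq u"
    by (simp add: sum_sq_def sum_list_sum_nth atLeast0LessThan)
  finally show ?thesis .
qed

lemma sum_sq_update: "i < length u \<Longrightarrow> sum_sq (u[i := v]) = sum_sq u - (u ! i)\<^sup>2 + v\<^sup>2"
proof -
  assume i: "i < length u"
  have "sum_sq (u[i := v]) = (\<Sum>l<length u. (u ! l)\<^sup>2 + (if l = i then v\<^sup>2 - (u ! i)\<^sup>2 else 0))"
    unfolding sum_sq_def by (intro sum.cong) (auto simp: nth_list_update)
  also have "\<dots> = sum_sq u + (v\<^sup>2 - (u ! i)\<^sup>2)"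
    using i by (simp add: sum.distrib sum_sq_def)
  finally show ?thesis by simp
qed

lemma sum_weighted_eq_sum_partial_sums:
  fixes w :: "nat \<Rightarrow> int"
  shows "(\<Sum>i<n. int (n - i) * w i) = (\<Sum>k<n. \<Sum>i<Suc k. w i)"
proof (induction n)
  case (Suc n)
  have "(\<Sum>i<Suc n. int (Suc n - i) * w i) = (\<Sum>i<Suc n. int (n - i) * w i + w i)"
    by (intro sum.cong) (auto simp: algebra_simps Suc_diff_le)
  also have "\<dots> = (\<Sum>i<n. int (n - i) * w i) + (\<Sum>i<Suc n. w i)"
    by (simp add: sum.distrib)
  finally show ?case using Suc by simp
qed simp

lemma block_sq_eq:
  "block_sq u = sum_sq u + 2 * (\<Sum>k<length u. top_sum u (Suc k)) + (\<Sum>i<length u. (int (length u - i))\<^sup>2)"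
proof -
  let ?n = "length u"
  have "block_sq u = (\<Sum>i<?n. (abs_desc u ! i)\<^sup>2 + 2 * (int (?n - i) * abs_desc u ! i) + (int (?n - i))\<^sup>2)"
    unfolding block_sq_def by (intro sum.cong refl) (simp add: power2_sum)
  also have "\<dots> = (\<Sum>i<?n. (abs_desc u ! i)\<^sup>2) + 2 * (\<Sum>i<?n. int (?n - i) * abs_desc u ! i)
      + (\<Sum>i<?n. (int (?n - i))\<^sup>2)"
    by (simp add: sum.distrib sum_distrib_left)
  finally show ?thesis
    using sum_sq_abs_desc sum_weighted_eq_sum_partial_sums[of ?n "\<lambda>i. abs_desc u ! i"]
    unfolding top_sum_def by simp
qed

lemma block_sq_abs_dominated:
  assumes "abs_dominated u' u"
  shows "block_sq u' + (sum_sq u - sum_sq u') \<le> block_sq u"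
proof -
  have "length u' = length u" using assms abs_dominated_def by simp
  moreover have "(\<Sum>k<length u. top_sum u' (Suc k)) \<le> (\<Sum>k<length u. top_sum u (Suc k))"
    using top_sum_mono_abs_dominated[OF assms] by (intro sum_mono) simp
  ultimately show ?thesis using block_sq_eq[of u] block_sq_eq[of u'] by simp
qed

lemma block_sq_decrease_entry:
  assumes "i < length u" "0 < d" "d \<le> u ! i"
  shows "block_sq (u[i := u ! i - d]) < block_sq u"
proof -
  have "abs_dominated (u[i := u ! i - d]) u"
    using assms by (intro abs_dominated_pointwise) (auto simp: nth_list_update)
  then have "block_sq (u[i := u ! i - d]) + ((u ! i)\<^sup>2 - (u ! i - d)\<^sup>2) \<le> block_sq u"
    using block_sq_abs_dominated sum_sq_update[OF assms(1)] by fastforce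
  moreover have "(u ! i)\<^sup>2 - (u ! i - d)\<^sup>2 = d * (2 * u ! i - d)"
    by (simp add: power2_eq_square algebra_simps)
  moreover have "0 < d * (2 * u ! i - d)" using assms(2,3) by simp
  ultimately show ?thesis by linarith
qed

lemma block_sq_update_two:
  assumes "i < length u" "j < length u" "i \<noteq> j"
    and "\<bar>v\<bar> + \<bar>w\<bar> \<le> \<bar>u ! i\<bar> + \<bar>u ! j\<bar>"
    and "\<bar>v\<bar> \<le> max \<bar>u ! i\<bar> \<bar>u ! j\<bar>" "\<bar>w\<bar> \<le> max \<bar>u ! i\<bar> \<bar>u ! j\<bar>"
  shows "block_sq (u[i := v, j := w]) + ((u ! i)\<^sup>2 - v\<^sup>2) + ((u ! j)\<^sup>2 - w\<^sup>2) \<le> block_sq u"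
proof -
  have "sum_sq (u[i := v, j := w]) = sum_sq u - (u ! i)\<^sup>2 + v\<^sup>2 - (u ! j)\<^sup>2 + w\<^sup>2"
    using sum_sq_update[of i u v] sum_sq_update[of j "u[i := v]" w] assms(1-3) by simp
  then show ?thesis
    using block_sq_abs_dominated[OF abs_dominated_update_two[OF assms]] by linarith
qed

lemma block_sq_decrease_two_entries:
  assumes ij: "i < length u" "j < length u" "i \<noteq> j"
    and pos: "1 \<le> u ! i" "1 \<le> u ! j \<or> 2 \<le> u ! i + u ! j"
  shows "block_sq (u[i := u ! i - 1, j := u ! j - 1]) < block_sq u"
proof -
  have "block_sq (u[i := u ! i - 1, j := u ! j - 1]) + (2 * u ! i - 1) + (2 * u ! j - 1) \<le> block_sq u"
    using block_sq_update_two[OF ij, of "u ! i - 1" "u ! j - 1"] pos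
    by (cases "1 \<le> u ! j") (auto simp: power2_eq_square algebra_simps)
  then show ?thesis using pos by linarith
qed

lemma block_sq_balance_negative_entries:
  assumes ij: "i < length u" "j < length u" "i \<noteq> j"
    and neg: "u ! i \<le> 0" "u ! j < u ! i"
  shows "block_sq (u[i := u ! i - 1, j := u ! j + 1]) \<le> block_sq u"
proof -
  have "block_sq (u[i := u ! i - 1, j := u ! j + 1]) + (2 * u ! i - 1) + (- 2 * u ! j - 1) \<le> block_sq u"
    using block_sq_update_two[OF ij, of "u ! i - 1" "u ! j + 1"] neg
    by (auto simp: power2_eq_square algebra_simps)
  then show ?thesis using neg by linarith
qed

section \<open>Partitions in a box and their duals\<close>

definition box_partitions :: "nat \<Rightarrow> nat \<Rightarrow> int list set" where
  "box_partitions p q = {x. length x = p \<and> sorted_wrt (\<ge>) x \<and> (\<forall>v\<in>set x. 0 \<le> v \<and> v \<le> int q)}"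

text \<open>The conjugate of the complement of \<open>x\<close> in the \<open>p \<times> q\<close> box, so that \<^const>\<open>Omega\<close> is the
  graph of \<open>box_dual p q\<close> on \<^const>\<open>box_partitions\<close>.\<close>

definition box_dual :: "nat \<Rightarrow> nat \<Rightarrow> int list \<Rightarrow> int list" where
  "box_dual p q x = map (\<lambda>j. int (card {i. i < p \<and> int q - x ! i \<ge> int j})) [1..<q+1]"

lemma Omega_eq_graph: "Omega p q = (\<lambda>x. (x, box_dual p q x)) ` box_partitions p q"
  unfolding Omega_def box_dual_def box_partitions_def by auto

lemma box_partitions_iff:
  "x \<in> box_partitions p q \<longleftrightarrow> length x = p \<and> (\<forall>i j. i \<le> j \<longrightarrow> j < p \<longrightarrow> x ! j \<le> x ! i)
     \<and> (\<forall>i<p. 0 \<le> x ! i \<and> x ! i \<le> int q)"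
proof -
  have "(\<forall>i j. i < j \<longrightarrow> j < p \<longrightarrow> x ! j \<le> x ! i) \<longleftrightarrow> (\<forall>i j. i \<le> j \<longrightarrow> j < p \<longrightarrow> x ! j \<le> x ! i)"
    by (metis le_neq_implies_less less_imp_le order_refl)
  then show ?thesis
    unfolding box_partitions_def sorted_wrt_iff_nth_less all_set_conv_all_nth by auto
qed

lemma finite_box_partitions: "finite (box_partitions p q)"
proof (rule finite_subset)
  show "box_partitions p q \<subseteq> {x. set x \<subseteq> {0..int q} \<and> length x = p}"
    unfolding box_partitions_def by auto
  show "finite {x. set x \<subseteq> {0..int q} \<and> length x = p}"
    by (rule finite_lists_length_eq) simp
qed

lemma replicate_zero_in_box_partitions: "replicate p 0 \<in> box_partitions p q"
  unfolding box_partitions_iff by simp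

lemma length_box_dual [simp]: "length (box_dual p q x) = q"
  by (simp add: box_dual_def)

lemma box_dual_nth:
  "j < q \<Longrightarrow> box_dual p q x ! j = int (card {i. i < p \<and> x ! i \<le> int q - int j - 1})"
  unfolding box_dual_def by (simp del: upt_Suc add: algebra_simps)

lemma box_dual_nth_le: "j < q \<Longrightarrow> box_dual p q x ! j \<le> int p"
  using card_mono[of "{..<p}" "{i. i < p \<and> x ! i \<le> int q - int j - 1}"] by (auto simp: box_dual_nth)

lemma box_dual_nth_le_pred:
  assumes "j < q" "0 < p" "int q - int j - 1 < x ! 0"
  shows "box_dual p q x ! j \<le> int p - 1"
proof -
  have "{i. i < p \<and> x ! i \<le> int q - int j - 1} \<subseteq> {1..<p}"
    using assms(3) by (auto simp: Suc_le_eq intro!: gr0I)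
  then have "card {i. i < p \<and> x ! i \<le> int q - int j - 1} \<le> p - 1"
    using card_mono[of "{1..<p}"] by fastforce
  then show ?thesis using assms(1,2) by (simp add: box_dual_nth)
qed

lemma box_dual_antimono:
  assumes "j \<le> j'" "j' < q"
  shows "box_dual p q x ! j' \<le> box_dual p q x ! j"
proof -
  have "{i. i < p \<and> x ! i \<le> int q - int j' - 1} \<subseteq> {i. i < p \<and> x ! i \<le> int q - int j - 1}"
    using assms(1) by auto
  then have "card {i. i < p \<and> x ! i \<le> int q - int j' - 1} \<le> card {i. i < p \<and> x ! i \<le> int q - int j - 1}"
    by (intro card_mono) auto
  then show ?thesis using assms box_dual_nth[of j' q p x] box_dual_nth[of j q p x] by simp
qed

lemma box_dual_in_box_partitions: "box_dual p q x \<in> box_partitions q p"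
  unfolding box_partitions_iff using box_dual_antimono box_dual_nth_le by (simp add: box_dual_nth)

lemma card_below_sorted_iff:
  assumes "x \<in> box_partitions p q" "i < p"
  shows "card {i'. i' < p \<and> x ! i' \<le> s} \<le> p - Suc i \<longleftrightarrow> s < x ! i"
proof
  have sorted: "\<And>i j. i \<le> j \<Longrightarrow> j < p \<Longrightarrow> x ! j \<le> x ! i"
    using assms(1) box_partitions_iff by blast
  show "s < x ! i" if "card {i'. i' < p \<and> x ! i' \<le> s} \<le> p - Suc i"
  proof (rule ccontr)
    assume "\<not> s < x ! i"
    then have "{i..<p} \<subseteq> {i'. i' < p \<and> x ! i' \<le> s}"
      using sorted[of i] by force
    then have "card {i..<p} \<le> card {i'. i' < p \<and> x ! i' \<le> s}"
      by (intro card_mono) simp_all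
    then show False using that assms(2) by simp
  qed
  show "card {i'. i' < p \<and> x ! i' \<le> s} \<le> p - Suc i" if "s < x ! i"
  proof -
    have "{i'. i' < p \<and> x ! i' \<le> s} \<subseteq> {Suc i..<p}"
    proof
      fix i' assume i': "i' \<in> {i'. i' < p \<and> x ! i' \<le> s}"
      have "\<not> i' \<le> i"
      proof
        assume "i' \<le> i"
        then have "x ! i \<le> x ! i'" using sorted assms(2) by simp
        then show False using i' that by simp
      qed
      then show "i' \<in> {Suc i..<p}" using i' by simp
    qed
    then have "card {i'. i' < p \<and> x ! i' \<le> s} \<le> card {Suc i..<p}"
      by (intro card_mono) simp_all
    then show ?thesis by simp
  qed
qed

lemma box_dual_box_dual:
  assumes x: "x \<in> box_partitions p q"
  shows "box_dual q p (box_dual p q x) = x"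
proof (rule nth_equalityI)
  have bounds: "\<And>i. i < p \<Longrightarrow> 0 \<le> x ! i \<and> x ! i \<le> int q" and len: "length x = p"
    using x box_partitions_iff by blast+
  then show "length (box_dual q p (box_dual p q x)) = length x" by simp
  fix i assume "i < length (box_dual q p (box_dual p q x))"
  then have i: "i < p" by simp
  have "{j. j < q \<and> box_dual p q x ! j \<le> int p - int i - 1} = {nat (int q - x ! i)..<q}"
  proof -
    have "box_dual p q x ! j \<le> int p - int i - 1 \<longleftrightarrow> int q - x ! i \<le> int j" if "j < q" for j
    proof -
      have "box_dual p q x ! j \<le> int p - int i - 1
          \<longleftrightarrow> card {i'. i' < p \<and> x ! i' \<le> int q - int j - 1} \<le> p - Suc i"
        unfolding box_dual_nth[OF that] using i by linarith
      then show ?thesis using card_below_sorted_iff[OF x i, of "int q - int j - 1"] by linarith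
    qed
    then show ?thesis using bounds[OF i] by auto
  qed
  moreover have "int (q - nat (int q - x ! i)) = x ! i"
    using bounds[OF i] by (simp add: of_nat_diff nat_le_iff)
  ultimately show "box_dual q p (box_dual p q x) ! i = x ! i"
    using i by (simp add: box_dual_nth)
qed

lemma box_partitions_last_index_of_head:
  assumes "x \<in> box_partitions p q" "0 < p"
  obtains r where "r < p" "\<And>i. i \<le> r \<Longrightarrow> x ! i = x ! 0" "\<And>i. r < i \<Longrightarrow> i < p \<Longrightarrow> x ! i < x ! 0"
proof -
  have sorted: "\<And>i j. i \<le> j \<Longrightarrow> j < p \<Longrightarrow> x ! j \<le> x ! i"
    using assms(1) box_partitions_iff by blast
  define R where "R = {i. i < p \<and> x ! i = x ! 0}"
  have R: "finite R" "0 \<in> R" using assms(2) by (simp_all add: R_def)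
  define r where "r = Max R"
  have "r \<in> R" using Max_in[OF R(1)] R(2) r_def by auto
  then have r: "r < p" "x ! r = x ! 0" by (simp_all add: R_def)
  have "x ! i = x ! 0" if "i \<le> r" for i
    using sorted[of 0 i] sorted[of i r] that r by simp
  moreover have "x ! i < x ! 0" if "r < i" "i < p" for i
  proof -
    have "i \<notin> R" using Max_ge[OF R(1), of i] that(1) r_def by auto
    then show ?thesis using sorted[of 0 i] that(2) by (simp add: R_def)
  qed
  ultimately show thesis using r(1) that by blast
qed

lemma box_partitions_decrement:
  assumes x: "x \<in> box_partitions p q" and r: "r < p" "1 \<le> x ! r"
    and last: "\<And>i. r < i \<Longrightarrow> i < p \<Longrightarrow> x ! i < x ! r"
  shows "x[r := x ! r - 1] \<in> box_partitions p q"
proof -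
  have len: "length x = p"
    and sorted: "\<And>i j. i \<le> j \<Longrightarrow> j < p \<Longrightarrow> x ! j \<le> x ! i"
    and bounds: "\<And>i. i < p \<Longrightarrow> 0 \<le> x ! i \<and> x ! i \<le> int q"
    using x box_partitions_iff by blast+
  have "x[r := x ! r - 1] ! j \<le> x[r := x ! r - 1] ! i" if "i \<le> j" "j < p" for i j
    using sorted[OF that] sorted[of i r] last[of j] that r len
    by (cases "i = r"; cases "j = r") (auto simp: nth_list_update)
  moreover have "0 \<le> x[r := x ! r - 1] ! i \<and> x[r := x ! r - 1] ! i \<le> int q" if "i < p" for i
    using bounds[OF that] bounds[OF r(1)] r len by (auto simp: nth_list_update)
  ultimately show ?thesis using len by (simp add: box_partitions_iff)
qed

lemma box_dual_decrement:
  assumes "length x = p" "r < p" "1 \<le> x ! r" "x ! r \<le> int q"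
  shows "box_dual p q (x[r := x ! r - 1])
           = (box_dual p q x)[nat (int q - x ! r) := box_dual p q x ! nat (int q - x ! r) + 1]"
    (is "?lhs = ?rhs")
proof (rule nth_equalityI)
  fix j assume "j < length ?lhs"
  then have j: "j < q" by simp
  let ?t = "int q - int j - 1"
  let ?S' = "{i. i < p \<and> x[r := x ! r - 1] ! i \<le> ?t}" and ?S = "{i. i < p \<and> x ! i \<le> ?t}"
  have "?S' - {r} = ?S - {r}" using assms by auto
  moreover have "r \<in> ?S' \<longleftrightarrow> x ! r - 1 \<le> ?t" "r \<in> ?S \<longleftrightarrow> x ! r \<le> ?t" using assms by auto
  ultimately have "int (card ?S') = int (card ?S) + (if j = nat (int q - x ! r) then 1 else 0)"
    using card.remove[of ?S' r] card.remove[of ?S r] card_Diff_singleton_if[of _ r] assms(3,4)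
    by (cases "r \<in> ?S"; cases "r \<in> ?S'") auto
  then show "?lhs ! j = ?rhs ! j"
    using j by (simp add: box_dual_nth nth_list_update)
qed simp

section \<open>The spin norm as a minimum over box partitions\<close>

definition spin_cost :: "nat \<Rightarrow> nat \<Rightarrow> int list \<Rightarrow> int list \<Rightarrow> int list \<Rightarrow> int" where
  "spin_cost p q a b x = block_sq (map2 (-) a x) + block_sq (map2 (-) b (box_dual p q x))"

lemma spin_norm_eq_Min:
  assumes "length a = p" "length b = q"
  shows "spin_norm p q (a, b) = Min ((\<lambda>x. sqrt (spin_cost p q a b x)) ` box_partitions p q)"
  unfolding spin_norm_def Omega_eq_graph image_image
proof (intro arg_cong[where f = Min] image_cong refl)
  fix x assume "x \<in> box_partitions p q"
  then have "length x = p" by (simp add: box_partitions_def)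
  then show "knorm p q (wminus (a, b) (x, box_dual p q x)) = sqrt (spin_cost p q a b x)"
    using assms by (simp add: knorm_eq_block_sq wminus_def spin_cost_def)
qed

lemma spin_cost_box_dual:
  assumes "x \<in> box_partitions p q"
  shows "spin_cost q p b a (box_dual p q x) = spin_cost p q a b x"
  using box_dual_box_dual[OF assms] by (simp add: spin_cost_def)

section \<open>u-large weights\<close>

lemma u_large_swap: "u_large q p (b, a) = u_large p q (a, b)"
proof -
  have "2 * int q * int p - 2 * (int q - int g) * (int p - int f)
      = 2 * int p * int q - 2 * (int p - int f) * (int q - int g)" for f g
    by (simp add: algebra_simps)
  then show ?thesis
    unfolding u_large_def by (metis (no_types, lifting) add.commute fst_conv snd_conv)
qed

lemma u_largeE:
  assumes "u_large p q (a, b)" "length a = p" "length b = q"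
  obtains f g where "f \<le> p" "g \<le> q"
    "(\<Sum>i<f. a ! i) + (\<Sum>j<g. b ! j) > 2 * int p * int q - 2 * (int p - int f) * (int q - int g)"
proof -
  obtain f g where fg: "f \<le> p" "g \<le> q"
    "sum_list (take f a) + sum_list (take g b) > 2 * int p * int q - 2 * (int p - int f) * (int q - int g)"
    using assms(1) unfolding u_large_def by auto
  moreover have "sum_list (take f a) = (\<Sum>i<f. a ! i)" "sum_list (take g b) = (\<Sum>j<g. b ! j)"
    using fg(1,2) assms(2,3) by (simp_all add: sum_list_sum_nth atLeast0LessThan min_def)
  ultimately show thesis by (intro that[of f g]) simp_all
qed

lemma not_u_large_if_bounded:
  assumes "length a = p" "length b = q"
    and "\<And>i. i < p \<Longrightarrow> a ! i \<le> int q" "\<And>j. j < q \<Longrightarrow> b ! j \<le> int p"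
  shows "\<not> u_large p q (a, b)"
proof
  assume "u_large p q (a, b)"
  then obtain f g where fg: "f \<le> p" "g \<le> q"
    and large: "(\<Sum>i<f. a ! i) + (\<Sum>j<g. b ! j) > 2 * int p * int q - 2 * (int p - int f) * (int q - int g)"
    using assms(1,2) by (rule u_largeE)
  have "(\<Sum>i<f. a ! i) \<le> int f * int q" "(\<Sum>j<g. b ! j) \<le> int g * int p"
    using sum_bounded_above[of "{..<f}" "\<lambda>i. a ! i" "int q"] sum_bounded_above[of "{..<g}" "\<lambda>j. b ! j" "int p"]
      fg assms(3,4) by simp_all
  moreover have "0 \<le> int g * (int p - int f)" "0 \<le> int f * (int q - int g)" using fg by simp_all
  moreover have "2 * int p * int q - 2 * (int p - int f) * (int q - int g)
      = int f * int q + int g * int p + int g * (int p - int f) + int f * (int q - int g)"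
    by (simp add: algebra_simps)
  ultimately show False using large by linarith
qed

lemma not_u_large_if_tail_bounded:
  assumes len: "length a = p" "length b = q" and k: "k \<le> q"
    and a: "\<And>i. i < p \<Longrightarrow> a ! i \<le> int q - int k"
    and b: "\<And>j. j < q \<Longrightarrow> b ! j \<le> 2 * int p" "\<And>j. k \<le> j \<Longrightarrow> j < q \<Longrightarrow> b ! j \<le> int p - 1"
  shows "\<not> u_large p q (a, b)"
proof
  assume "u_large p q (a, b)"
  then obtain f g where fg: "f \<le> p" "g \<le> q"
    and large: "(\<Sum>i<f. a ! i) + (\<Sum>j<g. b ! j) > 2 * int p * int q - 2 * (int p - int f) * (int q - int g)"
    using len by (rule u_largeE)
  have sum_a: "(\<Sum>i<f. a ! i) \<le> int f * (int q - int k)"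
    using sum_bounded_above[of "{..<f}" "\<lambda>i. a ! i" "int q - int k"] fg a by simp
  show False
  proof (cases "g \<le> k")
    case True
    have "(\<Sum>j<g. b ! j) \<le> int g * (2 * int p)"
      using sum_bounded_above[of "{..<g}" "\<lambda>j. b ! j" "2 * int p"] fg b(1) by simp
    moreover have "int f * (int q - int k) \<le> int f * (2 * (int q - int g))"
      using True k by (intro mult_left_mono) auto
    moreover have "2 * int p * int q - 2 * (int p - int f) * (int q - int g)
        = int g * (2 * int p) + int f * (2 * (int q - int g))"
      by (simp add: algebra_simps)
    ultimately show False using sum_a large by linarith
  next
    case False
    define d where "d = int g - int k"
    have "(\<Sum>j<g. b ! j) = (\<Sum>j<k. b ! j) + (\<Sum>j\<in>{k..<g}. b ! j)"
      using sum.union_disjoint[of "{..<k}" "{k..<g}" "\<lambda>j. b ! j"] False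
      by (simp add: ivl_disj_int_one ivl_disj_un_one)
    also have "\<dots> \<le> int k * (2 * int p) + d * (int p - 1)"
    proof -
      have "(\<Sum>j<k. b ! j) \<le> int k * (2 * int p)"
        using sum_bounded_above[of "{..<k}" "\<lambda>j. b ! j" "2 * int p"] b(1) k by simp
      moreover have "(\<Sum>j\<in>{k..<g}. b ! j) \<le> d * (int p - 1)"
        using sum_bounded_above[of "{k..<g}" "\<lambda>j. b ! j" "int p - 1"] b(2) fg(2) False
        unfolding d_def by (simp add: of_nat_diff)
      ultimately show ?thesis by linarith
    qed
    finally have sum_b: "(\<Sum>j<g. b ! j) \<le> int k * (2 * int p) + d * (int p - 1)" .
    have "int f * d \<le> int f * (int q - int k)"
      by (rule mult_left_mono) (use fg d_def in simp_all)
    moreover have "int f * d \<le> (int p + 1) * d"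
      by (rule mult_right_mono) (use False fg d_def in simp_all)
    moreover have "2 * int p * int q - 2 * (int p - int f) * (int q - int g)
        - (int f * (int q - int k) + (int k * (2 * int p) + d * (int p - 1)))
        = (int p + 1) * d + int f * (int q - int k) - 2 * (int f * d)"
      unfolding d_def by (simp add: algebra_simps)
    ultimately show False using sum_a sum_b large by linarith
  qed
qed

lemma kdominant_swap: "kdominant (b, a) = kdominant (a, b)"
  unfolding kdominant_def by auto

lemma kdominant_fst_nth:
  assumes "kdominant (a, b)" "i \<le> j" "j < length a"
  shows "a ! j \<le> a ! i" "0 \<le> a ! j"
  using assms sorted_wrt_ge_nth[of a i j] unfolding kdominant_def by auto

lemma kdominant_decrement_head:
  assumes "kdominant (a[0 := a ! 0 - 1], b[0 := b ! 0 - 1])" "0 < length a"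
  shows "1 \<le> a ! 0" "0 < i \<Longrightarrow> i < length a \<Longrightarrow> a ! i < a ! 0"
proof -
  have "0 \<le> a[0 := a ! 0 - 1] ! 0"
    using kdominant_fst_nth(2)[OF assms(1), of 0 0] assms(2) by simp
  then show "1 \<le> a ! 0" using assms(2) by simp
  assume "0 < i" "i < length a"
  then have "a[0 := a ! 0 - 1] ! i \<le> a[0 := a ! 0 - 1] ! 0"
    using kdominant_fst_nth(1)[OF assms(1), of 0 i] by simp
  then show "a ! i < a ! 0" using \<open>0 < i\<close> assms(2) by simp
qed

lemma u_large_head_room:
  assumes len: "length a = p" "length b = q" and dom: "kdominant (a, b)" and large: "u_large p q (a, b)"
    and k: "k < q" and a: "\<And>i. i < p \<Longrightarrow> a ! i \<le> int q - int k"
  shows "int p < b ! 0" and "b ! k \<le> int p - 1 \<Longrightarrow> 2 * int p < b ! 0"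
proof -
  have b_le: "\<And>i j. i \<le> j \<Longrightarrow> j < q \<Longrightarrow> b ! j \<le> b ! i"
    using kdominant_fst_nth(1)[of b a] dom len by (simp add: kdominant_swap)
  show "int p < b ! 0"
  proof (rule ccontr)
    assume "\<not> int p < b ! 0"
    then have "\<not> u_large p q (a, b)"
      using b_le[of 0] a by (intro not_u_large_if_bounded[OF len]) fastforce+
    then show False using large by simp
  qed
  assume b_k: "b ! k \<le> int p - 1"
  show "2 * int p < b ! 0"
  proof (rule ccontr)
    assume "\<not> 2 * int p < b ! 0"
    then have "\<not> u_large p q (a, b)"
      using b_le[of 0] b_le[of k] b_k a k by (intro not_u_large_if_tail_bounded[OF len, of k]) fastforce+
    then show False using large by simp
  qed
qed

section \<open>Lowering the spin cost\<close>

text \<open>Both changed entries of \<open>map2 (-) a x\<close> are nonpositive, and they move towards each other.\<close>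

lemma block_sq_lower_covered_head:
  assumes len: "length a = length x" and r: "r < length x" "x ! r = x ! 0"
    and covered: "a ! 0 \<le> x ! 0" and head: "0 < r \<Longrightarrow> a ! r < a ! 0"
  shows "block_sq (map2 (-) (a[0 := a ! 0 - 1]) (x[r := x ! r - 1])) \<le> block_sq (map2 (-) a x)"
proof (cases "r = 0")
  case True
  then have "map2 (-) (a[0 := a ! 0 - 1]) (x[r := x ! r - 1]) = map2 (-) a x"
    using len r by (intro nth_equalityI) (auto simp: nth_list_update)
  then show ?thesis by simp
next
  case False
  let ?u = "map2 (-) a x"
  have nonempty: "0 < length a" "0 < length x" using len r by linarith+
  then have "map2 (-) (a[0 := a ! 0 - 1]) (x[r := x ! r - 1]) = ?u[0 := ?u ! 0 - 1, r := ?u ! r + 1]"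
    using len r False by (intro nth_equalityI) (auto simp: nth_list_update)
  moreover have "?u ! 0 \<le> 0" "?u ! r < ?u ! 0"
    using len r False covered head nonempty by auto
  then have "block_sq (?u[0 := ?u ! 0 - 1, r := ?u ! r + 1]) \<le> block_sq ?u"
    using len r False by (intro block_sq_balance_negative_entries) auto
  ultimately show ?thesis by simp
qed

lemma block_sq_lower_head_raise_entry:
  assumes len: "length b = length y" and k: "k < length y"
    and head: "1 \<le> b ! 0 - y ! 0" "k = 0 \<Longrightarrow> 2 \<le> b ! 0 - y ! 0"
    and entry: "0 < k \<Longrightarrow> 1 \<le> b ! k - y ! k \<or> 2 \<le> (b ! 0 - y ! 0) + (b ! k - y ! k)"
  shows "block_sq (map2 (-) (b[0 := b ! 0 - 1]) (y[k := y ! k + 1])) < block_sq (map2 (-) b y)"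
proof -
  let ?v = "map2 (-) b y"
  have pos: "0 < length b" "0 < length y" using len k by linarith+
  then have v: "?v ! 0 = b ! 0 - y ! 0" "?v ! k = b ! k - y ! k" using len k by simp_all
  show ?thesis
  proof (cases "k = 0")
    case True
    then have "map2 (-) (b[0 := b ! 0 - 1]) (y[k := y ! k + 1]) = ?v[0 := ?v ! 0 - 2]"
      using len k pos by (intro nth_equalityI) (auto simp: nth_list_update)
    then show ?thesis using block_sq_decrease_entry[of 0 ?v 2] head True v len k pos by simp
  next
    case False
    then have "map2 (-) (b[0 := b ! 0 - 1]) (y[k := y ! k + 1]) = ?v[0 := ?v ! 0 - 1, k := ?v ! k - 1]"
      using len k pos by (intro nth_equalityI) (auto simp: nth_list_update)
    then show ?thesis
      using block_sq_decrease_two_entries[of 0 ?v k] head entry False v len k pos by simp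
  qed
qed

text \<open>If \<open>a ! 0 \<le> x ! 0\<close>, lower the last entry of \<open>x\<close> equal to \<open>x ! 0\<close>; this raises one entry
  of the dual partition, and u-largeness guarantees that \<open>b\<close> has enough room to absorb it.\<close>

lemma spin_cost_decrease_if_head_covered:
  assumes pq: "0 < p" "0 < q" and len: "length a = p" "length b = q"
    and dom: "kdominant (a, b)" "kdominant (a[0 := a ! 0 - 1], b[0 := b ! 0 - 1])"
    and large: "u_large p q (a, b)"
    and x: "x \<in> box_partitions p q" and covered: "a ! 0 \<le> x ! 0"
  shows "\<exists>x' \<in> box_partitions p q.
           spin_cost p q (a[0 := a ! 0 - 1]) (b[0 := b ! 0 - 1]) x' < spin_cost p q a b x"
proof -
  let ?y = "box_dual p q x"
  have a_le: "\<And>i. i < p \<Longrightarrow> a ! i \<le> a ! 0" and a_head: "\<And>i. 0 < i \<Longrightarrow> i < p \<Longrightarrow> a ! i < a ! 0"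
    using kdominant_fst_nth(1)[OF dom(1), of 0] kdominant_decrement_head(2)[OF dom(2)] len pq by auto
  have b_nonneg: "0 \<le> b ! k" if "k < q" for k
    using kdominant_fst_nth(2)[of b a k k] dom(1) len that by (simp add: kdominant_swap)
  define c where "c = x ! 0"
  have c: "1 \<le> c" "c \<le> int q"
    using covered kdominant_decrement_head(1)[OF dom(2)] x pq len
    by (auto simp: c_def box_partitions_iff)
  obtain r where r: "r < p" "\<And>i. i \<le> r \<Longrightarrow> x ! i = c" "\<And>i. r < i \<Longrightarrow> i < p \<Longrightarrow> x ! i < c"
    using box_partitions_last_index_of_head[OF x pq(1)] c_def by metis
  define k where "k = nat (int q - c)"
  have k: "k < q" "int k = int q - c" using c by (auto simp: k_def)
  define x' where "x' = x[r := c - 1]"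
  have x': "x' \<in> box_partitions p q"
    unfolding x'_def using box_partitions_decrement[OF x r(1)] r c by simp
  have y': "box_dual p q x' = ?y[k := ?y ! k + 1]"
    unfolding x'_def k_def using box_dual_decrement[of x p r q] x r c by (simp add: box_partitions_def)
  have "a ! i \<le> int q - int k" if "i < p" for i
    using a_le[OF that] covered k(2) unfolding c_def by simp
  note b_head = u_large_head_room[OF len dom(1) large k(1) this]
  have y_0: "?y ! 0 \<le> int p" and y_k: "?y ! k \<le> int p - 1"
    using box_dual_nth_le[OF pq(2)] box_dual_nth_le_pred[of k q p x] k pq unfolding c_def by simp_all
  have "block_sq (map2 (-) (a[0 := a ! 0 - 1]) x') \<le> block_sq (map2 (-) a x)"
    unfolding x'_def using block_sq_lower_covered_head[of a x r] len x r covered a_head pq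
    by (simp add: box_partitions_def)
  moreover have "block_sq (map2 (-) (b[0 := b ! 0 - 1]) (?y[k := ?y ! k + 1])) < block_sq (map2 (-) b ?y)"
  proof (rule block_sq_lower_head_raise_entry)
    show "1 \<le> b ! 0 - ?y ! 0" using b_head(1) y_0 by linarith
    show "2 \<le> b ! 0 - ?y ! 0" if "k = 0" using b_head(1) y_k that by simp
    show "1 \<le> b ! k - ?y ! k \<or> 2 \<le> (b ! 0 - ?y ! 0) + (b ! k - ?y ! k)"
      using b_head(2) b_nonneg[OF k(1)] y_0 y_k by linarith
  qed (use len k in simp_all)
  ultimately show ?thesis
    using x' y' unfolding spin_cost_def by (intro bexI[of _ x']) simp_all
qed

lemma exists_lower_spin_cost:
  assumes pq: "0 < p" "0 < q" and len: "length a = p" "length b = q"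
    and dom: "kdominant (a, b)" "kdominant (a[0 := a ! 0 - 1], b[0 := b ! 0 - 1])"
    and large: "u_large p q (a, b)" and x: "x \<in> box_partitions p q"
  shows "\<exists>x' \<in> box_partitions p q.
           spin_cost p q (a[0 := a ! 0 - 1]) (b[0 := b ! 0 - 1]) x' < spin_cost p q a b x"
proof -
  let ?y = "box_dual p q x"
  consider "a ! 0 \<le> x ! 0" | "b ! 0 \<le> ?y ! 0" | "x ! 0 < a ! 0" "?y ! 0 < b ! 0" by linarith
  then show ?thesis
  proof cases
    case 1
    then show ?thesis by (rule spin_cost_decrease_if_head_covered[OF assms])
  next
    case 2
    text \<open>This is case 1 for the dual partition, with the roles of the two blocks exchanged.\<close>
    have "kdominant (b, a)" "kdominant (b[0 := b ! 0 - 1], a[0 := a ! 0 - 1])" "u_large q p (b, a)"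
      using dom large by (simp_all add: kdominant_swap u_large_swap)
    then obtain y' where y': "y' \<in> box_partitions q p"
      "spin_cost q p (b[0 := b ! 0 - 1]) (a[0 := a ! 0 - 1]) y' < spin_cost q p b a ?y"
      using spin_cost_decrease_if_head_covered[OF pq(2,1) len(2,1)] box_dual_in_box_partitions 2
      by blast
    show ?thesis
    proof (intro bexI)
      show "box_dual q p y' \<in> box_partitions p q" by (rule box_dual_in_box_partitions)
      show "spin_cost p q (a[0 := a ! 0 - 1]) (b[0 := b ! 0 - 1]) (box_dual q p y') < spin_cost p q a b x"
        using y'(2) spin_cost_box_dual[OF y'(1)] spin_cost_box_dual[OF x] by simp
    qed
  next
    case 3
    have lx: "length x = p" using x by (simp add: box_partitions_def)
    let ?u = "map2 (-) a x" and ?v = "map2 (-) b ?y"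
    have "map2 (-) (a[0 := a ! 0 - 1]) x = ?u[0 := ?u ! 0 - 1]"
      using len lx pq by (intro nth_equalityI) (auto simp: nth_list_update)
    moreover have "map2 (-) (b[0 := b ! 0 - 1]) ?y = ?v[0 := ?v ! 0 - 1]"
      using len pq by (intro nth_equalityI) (auto simp: nth_list_update)
    moreover have "block_sq (?u[0 := ?u ! 0 - 1]) < block_sq ?u"
      using 3 len lx pq by (intro block_sq_decrease_entry) auto
    moreover have "block_sq (?v[0 := ?v ! 0 - 1]) < block_sq ?v"
      using 3 len pq by (intro block_sq_decrease_entry) auto
    ultimately show ?thesis using x unfolding spin_cost_def by (intro bexI[of _ x]) simp_all
  qed
qed

lemma map2_minus_replicate_zero: "map2 (-) xs (replicate (length xs) 0) = (xs :: int list)"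
  by (induction xs) simp_all

lemma wminus_beta:
  assumes "length a = p" "length b = q" "0 < p" "0 < q"
  shows "wminus (a, b) (beta p q) = (a[0 := a ! 0 - 1], b[0 := b ! 0 - 1])"
  using assms(3,4) map2_minus_replicate_zero unfolding wminus_def beta_def assms(1,2)[symmetric]
  by (cases a; cases b) simp_all

theorem theorem1p1:
  fixes p q :: nat and a b :: "int list"
  assumes "1 \<le> p" and "p \<le> q"
    and "length a = p" and "length b = q"
    and "kdominant (a, b)"
    and "u_large p q (a, b)"
    and "kdominant (wminus (a, b) (beta p q))"
  shows "spin_norm p q (a, b) > spin_norm p q (wminus (a, b) (beta p q))"
proof -
  have pq: "0 < p" "0 < q" using assms(1,2) by simp_all
  define a' where "a' = a[0 := a ! 0 - 1]"
  define b' where "b' = b[0 := b ! 0 - 1]"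
  have beta: "wminus (a, b) (beta p q) = (a', b')"
    unfolding a'_def b'_def using wminus_beta[OF assms(3,4) pq] .
  have len': "length a' = p" "length b' = q" using assms(3,4) by (simp_all add: a'_def b'_def)
  let ?norms = "\<lambda>a b. (\<lambda>x. sqrt (spin_cost p q a b x)) ` box_partitions p q"
  have fin: "finite (?norms a b)" "?norms a b \<noteq> {}" for a b
    using finite_box_partitions replicate_zero_in_box_partitions[of p q] by auto
  obtain x where x: "x \<in> box_partitions p q" "spin_norm p q (a, b) = sqrt (spin_cost p q a b x)"
    using Min_in[OF fin] spin_norm_eq_Min[OF assms(3,4)] by auto
  obtain x' where x': "x' \<in> box_partitions p q" "spin_cost p q a' b' x' < spin_cost p q a b x"
    using exists_lower_spin_cost[OF pq assms(3,4,5) _ assms(6) x(1)] assms(7)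
    unfolding beta a'_def b'_def by blast
  have "spin_norm p q (a', b') \<le> sqrt (spin_cost p q a' b' x')"
    using Min_le[OF fin(1)] x'(1) unfolding spin_norm_eq_Min[OF len'] by simp
  also have "\<dots> < spin_norm p q (a, b)" using x'(2) x(2) by simp
  finally show ?thesis using beta by simp
qed

end
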